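(* Let $n>1$ be an integer with $F_n=D_n$ such that $n+1$ is prime. Then for every integer $k\ge0$, the integer $m=n(n+1)^k$ satisfies $F_m=D_m$.
   Context: For a composite integer $m$, let $d(m)$ denote the largest divisor of $m$ with $1<d(m)<m$. Define $f$ on integers $m>1$ by $f(m)=m-1$ if $m$ is prime and $f(m)=m-d(m)$ if $m$ is composite. Let $f^{(0)}(m)=m$, $f^{(i)}=f\circ f^{(i-1)}$. Define $F_m=\{m,f(m),f^{(2)}(m),\dots,1\}$, the set of iterates of $f$ from $m$ up to and including the first occurrence of $1$, and let $D_m$ be the set of positive divisors of $m$. *)

theory Defs
  imports "HOL-Computational_Algebra.Primes"
begin

text \<open>Largest divisor d of m with 1 < d < m (meaningful for composite m).\<close>
definition dmax :: "nat \<Rightarrow> nat" where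
  "dmax m = Max {d. d dvd m \<and> 1 < d \<and> d < m}"

definition fstep :: "nat \<Rightarrow> nat" where
  "fstep m = (if prime m then m - 1 else m - dmax m)"

text \<open>F_m: the iterates of f starting from m, up to and including the first occurrence of 1.\<close>
definition Fset :: "nat \<Rightarrow> nat set" where
  "Fset m = {(fstep ^^ i) m | i. \<forall>j<i. (fstep ^^ j) m \<noteq> 1}"

definition Dset :: "nat \<Rightarrow> nat set" where
  "Dset m = {d. d dvd m \<and> 0 < d}"

end

theory Submission
  imports Defs
begin

text \<open>For m > 1 with least prime factor q one has f(m) = m - m/q = (m/q)(q - 1), whether m is
prime or not. If every prime factor of y is at most the prime p, then p y has the same least
prime factor as y, so f(p y) = p f(y), and f(y) again has all its prime factors at most p.
Following the orbit of p y down to p and then f(p) = p - 1 gives F(p y) = p F(y) \<union> F(p - 1).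
For p = n + 1 and y = n p^k this matches D(n p^(k+1)) = p D(n p^k) \<union> D(n), valid because p does
not divide n, and the theorem follows by induction on k.\<close>

definition least_prime_factor :: "nat \<Rightarrow> nat" where
  "least_prime_factor m = Min (prime_factors m)"

lemma least_prime_factor:
  assumes "m > 1"
  shows "prime (least_prime_factor m)" "least_prime_factor m dvd m"
    and "prime r \<Longrightarrow> r dvd m \<Longrightarrow> least_prime_factor m \<le> r"
proof -
  have "prime_factors m \<noteq> {}"
    using assms by (simp add: prime_factorization_empty_iff)
  then have "least_prime_factor m \<in> prime_factors m"
    unfolding least_prime_factor_def by (rule Min_in[OF finite_set_mset])
  then show "prime (least_prime_factor m)" "least_prime_factor m dvd m"
    by auto
  show "prime r \<Longrightarrow> r dvd m \<Longrightarrow> least_prime_factor m \<le> r"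
    using assms unfolding least_prime_factor_def
    by (intro Min_le[OF finite_set_mset]) (simp add: in_prime_factors_iff)
qed

lemma dmax_eq_div_least_prime_factor:
  assumes "m > 1" "\<not> prime m"
  shows "dmax m = m div least_prime_factor m"
proof -
  let ?q = "least_prime_factor m"
  have q: "prime ?q" "?q dvd m" using least_prime_factor assms(1) by auto
  have "?q > 1" using q(1) prime_gt_1_nat by blast
  have "m div ?q \<noteq> 1" using q assms(2) by (metis dvd_mult_div_cancel mult.right_neutral)
  moreover have "m div ?q \<noteq> 0" using q assms(1) by (simp add: dvd_div_eq_0_iff)
  moreover have "m div ?q dvd m" using q(2) by (metis dvd_mult_div_cancel dvd_triv_right)
  ultimately have in_S: "m div ?q \<in> {d. d dvd m \<and> 1 < d \<and> d < m}"
    using \<open>?q > 1\<close> assms(1) by simp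
  have "d \<le> m div ?q" if d: "d dvd m" "1 < d" "d < m" for d
  proof -
    obtain e where e: "m = d * e" using d(1) by blast
    have "e \<noteq> 0" "e \<noteq> 1" using e d assms(1) by auto
    then obtain r where r: "prime r" "r dvd e" using prime_factor_nat by blast
    have "?q \<le> r" using least_prime_factor(3)[OF assms(1) r(1)] r(2) e by simp
    also have "r \<le> e" using r(2) \<open>e \<noteq> 0\<close> by (simp add: dvd_imp_le)
    finally have "m div e \<le> m div ?q" using \<open>?q > 1\<close> by (simp add: div_le_mono2)
    then show ?thesis using e \<open>e \<noteq> 0\<close> by simp
  qed
  then show ?thesis
    unfolding dmax_def by (intro Max_eqI[OF _ _ in_S]) (auto intro: finite_subset[of _ "{..m}"])
qed

lemma fstep_eq_least_prime_factor:
  assumes "m > 1"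
  shows "fstep m = m - m div least_prime_factor m"
proof (cases "prime m")
  case True
  then have "least_prime_factor m = m"
    using least_prime_factor[OF assms] by (simp add: primes_dvd_imp_eq)
  then show ?thesis using True assms by (simp add: fstep_def)
next
  case False
  then show ?thesis using assms by (simp add: fstep_def dmax_eq_div_least_prime_factor)
qed

lemma fstep_bounds:
  assumes "m > 1"
  shows "0 < fstep m" "fstep m < m"
proof -
  let ?q = "least_prime_factor m"
  have "?q > 1" using least_prime_factor(1)[OF assms] by (rule prime_gt_1_nat)
  have "?q \<le> m" using least_prime_factor(2)[OF assms] assms by (simp add: dvd_imp_le)
  with \<open>?q > 1\<close> have "0 < m div ?q" "m div ?q < m"
    using assms by (auto simp: div_greater_zero_iff div_less_dividend)
  then show "0 < fstep m" "fstep m < m"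
    using fstep_eq_least_prime_factor[OF assms] by auto
qed

lemma least_prime_factor_mult_prime:
  assumes "prime p" "y > 1" "\<forall>r\<in>prime_factors y. r \<le> p"
  shows "least_prime_factor (p * y) = least_prime_factor y"
proof -
  have "prime_factors (p * y) = insert p (prime_factors y)"
    using assms by (simp add: prime_factors_product prime_prime_factors)
  moreover have "prime_factors y \<noteq> {}"
    using assms(2) by (simp add: prime_factorization_empty_iff)
  ultimately show ?thesis
    using assms(3) unfolding least_prime_factor_def
    by (simp add: min_absorb2 Min_le_iff)
qed

lemma fstep_mult_prime:
  assumes "prime p" "y > 1" "\<forall>r\<in>prime_factors y. r \<le> p"
  shows "fstep (p * y) = p * fstep y"
proof -
  have "p * y > 1" using assms(1,2) prime_gt_1_nat less_1_mult by blast
  moreover have "least_prime_factor y dvd y" using least_prime_factor(2)[OF assms(2)] .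
  ultimately show ?thesis
    using assms fstep_eq_least_prime_factor least_prime_factor_mult_prime
    by (simp add: div_mult_swap diff_mult_distrib2)
qed

lemma prime_factors_fstep_le:
  assumes "y > 1" "\<forall>r\<in>prime_factors y. r \<le> p"
  shows "\<forall>r\<in>prime_factors (fstep y). r \<le> p"
proof -
  let ?q = "least_prime_factor y"
  have q: "prime ?q" "?q dvd y" using least_prime_factor[OF assms(1)] by auto
  then have "?q \<le> p" using assms by (simp add: in_prime_factors_iff)
  have "?q > 1" using q(1) by (rule prime_gt_1_nat)
  have "fstep y = (y div ?q) * (?q - 1)"
    using fstep_eq_least_prime_factor[OF assms(1)] q(2)
    by (metis diff_mult_distrib2 dvd_mult_div_cancel mult.commute mult.right_neutral)
  moreover have "y div ?q \<noteq> 0" "?q - 1 \<noteq> 0"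
    using q(2) assms(1) \<open>?q > 1\<close> by (auto simp: dvd_div_eq_0_iff)
  moreover have "\<forall>r\<in>prime_factors (y div ?q). r \<le> p"
  proof -
    have "y div ?q dvd y" using q(2) by (metis dvd_mult_div_cancel dvd_triv_right)
    then show ?thesis using assms dvd_prime_factors[of y "y div ?q"] by auto
  qed
  moreover have "\<forall>r\<in>prime_factors (?q - 1). r \<le> p"
    using \<open>?q \<le> p\<close> by (auto simp: in_prime_factors_iff dest!: dvd_imp_le)
  ultimately show ?thesis by (auto simp: prime_factors_product)
qed

lemma ex_nat_split: "(\<exists>i::nat. P i) \<longleftrightarrow> P 0 \<or> (\<exists>i. P (Suc i))"
  by (metis not0_implies_Suc)

lemma Fset_1: "Fset 1 = {1}"
proof -
  have "x \<in> Fset 1 \<longleftrightarrow> x = 1" for x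
    unfolding Fset_def mem_Collect_eq
    by (subst ex_nat_split) (simp add: All_less_Suc2 del: funpow.simps)
  then show ?thesis by blast
qed

lemma Fset_step:
  assumes "m \<noteq> 1"
  shows "Fset m = insert m (Fset (fstep m))"
proof -
  have "x \<in> Fset m \<longleftrightarrow> x = m \<or> x \<in> Fset (fstep m)" for x
    unfolding Fset_def mem_Collect_eq using assms
    by (subst ex_nat_split) (simp add: All_less_Suc2 funpow_Suc_right del: funpow.simps)
  then show ?thesis by blast
qed

lemma Fset_mult_prime:
  assumes "prime p" "y > 0" "\<forall>r\<in>prime_factors y. r \<le> p"
  shows "Fset (p * y) = (\<lambda>z. p * z) ` Fset y \<union> Fset (p - 1)"
  using assms(2,3)
proof (induction y rule: less_induct)
  case (less y)
  have "p > 1" using assms(1) by (rule prime_gt_1_nat)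
  show ?case
  proof (cases "y = 1")
    case True
    have "fstep p = p - 1" using assms(1) by (simp add: fstep_def)
    then show ?thesis unfolding True Fset_1 using Fset_step[of p] \<open>p > 1\<close> by simp
  next
    case False
    with less.prems have "y > 1" by simp
    have "p * y \<noteq> 1" using \<open>p > 1\<close> \<open>y > 1\<close> by simp
    have IH: "Fset (p * fstep y) = (\<lambda>z. p * z) ` Fset (fstep y) \<union> Fset (p - 1)"
      using less.IH fstep_bounds[OF \<open>y > 1\<close>] prime_factors_fstep_le[OF \<open>y > 1\<close> less.prems(2)]
      by blast
    have "Fset (p * y) = insert (p * y) (Fset (p * fstep y))"
      using Fset_step[OF \<open>p * y \<noteq> 1\<close>] fstep_mult_prime[OF assms(1) \<open>y > 1\<close> less.prems(2)]
      by simp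
    also have "\<dots> = (\<lambda>z. p * z) ` Fset y \<union> Fset (p - 1)"
      using IH Fset_step[OF False] by simp
    finally show ?thesis .
  qed
qed

lemma Dset_mult_prime_power:
  assumes "prime p" "\<not> p dvd n"
  shows "Dset (n * p ^ Suc k) = (\<lambda>z. p * z) ` Dset (n * p ^ k) \<union> Dset n"
proof (intro set_eqI iffI)
  fix d assume d: "d \<in> Dset (n * p ^ Suc k)"
  show "d \<in> (\<lambda>z. p * z) ` Dset (n * p ^ k) \<union> Dset n"
  proof (cases "p dvd d")
    case True
    then obtain e where "d = p * e" by blast
    then show ?thesis using d assms(1) by (auto simp: Dset_def mult.left_commute)
  next
    case False
    then have "coprime p d" using assms(1) by (simp add: prime_imp_coprime)
    then have "coprime d (p ^ Suc k)" by (simp add: coprime_commute)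
    then have "d dvd n" using d by (simp add: Dset_def coprime_dvd_mult_left_iff)
    then show ?thesis using d by (simp add: Dset_def)
  qed
next
  fix d assume "d \<in> (\<lambda>z. p * z) ` Dset (n * p ^ k) \<union> Dset n"
  then show "d \<in> Dset (n * p ^ Suc k)"
    using prime_gt_0_nat[OF assms(1)] by (auto simp: Dset_def mult.left_commute intro: dvd_mult2)
qed

lemma prime_factors_mult_prime_power_le:
  fixes p n :: nat
  assumes "prime p" "n \<le> p"
  shows "\<forall>r\<in>prime_factors (n * p ^ k). r \<le> p"
proof
  fix r assume r: "r \<in> prime_factors (n * p ^ k)"
  then have "prime r" "n > 0" "r dvd n * p ^ k" by (auto simp: in_prime_factors_iff)
  then have "r dvd n \<or> r dvd p" by (auto simp: prime_dvd_mult_iff dest: prime_dvd_power)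
  then show "r \<le> p"
  proof
    assume "r dvd n"
    then have "r \<le> n" using \<open>n > 0\<close> by (rule dvd_imp_le)
    then show ?thesis using assms(2) by simp
  next
    assume "r dvd p"
    then show ?thesis using prime_gt_0_nat[OF assms(1)] by (rule dvd_imp_le)
  qed
qed

theorem proposition5:
  fixes n :: nat
  assumes "n > 1" and "Fset n = Dset n" and "prime (n + 1)"
  shows "\<forall>k::nat. Fset (n * (n + 1) ^ k) = Dset (n * (n + 1) ^ k)"
proof
  fix k
  let ?p = "n + 1"
  have "\<not> ?p dvd n" using assms(1) by (auto dest: dvd_imp_le)
  show "Fset (n * ?p ^ k) = Dset (n * ?p ^ k)"
  proof (induction k)
    case 0
    then show ?case using assms(2) by simp
  next
    case (Suc k)
    have "\<forall>r\<in>prime_factors (n * ?p ^ k). r \<le> ?p"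
      by (rule prime_factors_mult_prime_power_le[OF assms(3)]) simp
    then have "Fset (?p * (n * ?p ^ k)) = (\<lambda>z. ?p * z) ` Fset (n * ?p ^ k) \<union> Fset n"
      using Fset_mult_prime[OF assms(3)] assms(1) by simp
    then show ?case
      using Suc.IH assms(2) Dset_mult_prime_power[OF assms(3) \<open>\<not> ?p dvd n\<close>]
      by (simp add: mult_ac)
  qed
qed

end
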